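(* Let $\mathcal{B}$ be a linear-quadratic algebra over $R$ with intrinsic grading as described below, and let $\mathcal{B}^!$ be its quadratic dual with differential $\mu_1$. Define $\delta':R\to\mathcal{B}^!\otimes_R\mathcal{B}^{op}$ by \[ \delta'(e)=\sum_{i:\ e_L(b_i)=e}b_i^*\otimes(b_i)^{op} \] for each elementary idempotent $e$. Then $\delta'$ satisfies the rank-one Type DD structure relations: writing $\delta'(1)=\sum_s a_s\otimes c_s^{op}$, \[ \sum_s(-1)^{\deg_h c_s}\mu_1(a_s)\otimes c_s^{op}+\sum_s a_s\otimes\mu_1(c_s)^{op}+\sum_{s,t}(-1)^{\deg_h(a_t)\deg_h(c_s)}a_sa_t\otimes c_t^{op}c_s^{op}=0 \] in $\mathcal{B}^!\otimes_R\mathcal{B}^{op}$ (where $c_t^{op}c_s^{op}=(c_sc_t)^{op}$).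
   Context: $R=\mathbb{Z}e_1\times\cdots\times\mathbb{Z}e_k$. $\mathcal{B}$ is a unital associative $R$-algebra with a finite set of multiplicative generators $b_1<\dots<b_m$, each with a unique left idempotent $e_L(b_i)$ and right idempotent $e_R(b_i)$. Let $V$ be the free abelian group on the $b_i$ (an $R$-bimodule), $T(V)=\bigoplus_{k\ge0}V^{\otimes_Rk}$, $\mathcal{B}=T(V)/J$, with $J\cap V=0$ and $J=T(V)J_2T(V)$, $J_2=J\cap(V\oplus V\otimes_RV)$ (linear-quadratic). Let $I\subset V\otimes_RV$ be the projection of $J_2$ and $\varphi:I\to V$ the map with $\varphi(r)\oplus r\in J_2$. $\mathcal{B}$ has an intrinsic grading with generators homogeneous, $I$ generated by homogeneous elements, $\varphi$ degree preserving; $\mathcal{B}$ is in homological degree $0$ with zero differential. Quadratic dual: $V^*=\mathrm{Hom}_{\mathbb{Z}}(V,\mathbb{Z})$ with dual basis $b_i^*$ (same idempotents as $b_i$), $I^\perp\subset V^*\otimes_RV^*$ the annihilator of $I$, $\mathcal{B}^!=T(V^* )/(T(V^* )I^\perp T(V^* ))$, $b_i^*$ in bidegree $(-\deg b_i,1)$. As in the paper, the degree-$2$ part $(V^*\otimes_RV^* )/I^\perp$ is identified with $I^*=\mathrm{Hom}_{\mathbb{Z}}(I,\mathbb{Z})$ by restriction, and $\mu_1(v^* )=\varphi^*(v^* )$ on generators, extended by $\mu_1(xy)=(-1)^{\deg_h x}\mu_1(x)y+x\mu_1(y)$. The differential on $\mathcal{B}$ (and on $\mathcal{B}^{op}$)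 is zero. *)

theory Defs
  imports Main "HOL-Library.Function_Algebras"
begin

text \<open>
Elementary idempotents e_1..e_k are the elements of a finite set Idem,
generators b_1..b_m the elements of a finite set Gens, with left/right idempotents eL, eR.
A basis element of the tensor algebra T(V) = (+)_n V^(tensor_R n) is a composable path
(e, [x1,...,xn]): e is the start idempotent (for n = 0 it is the idempotent e itself),
eL x1 = e and eR x_i = eL x_(i+1).  Since the dual basis b_i^* carries the same idempotents as b_i,
T(V^*) has the same path basis; the dual generator b_i^* is represented by the same
function as b_i (gen eL i).
\<close>

type_synonym ('k,'i) path = "'k \<times> 'i list"
type_synonym ('k,'i) tel = "('k,'i) path \<Rightarrow> int"
type_synonym ('k,'i) tensel = "('k,'i) path \<times> ('k,'i) path \<Rightarrow> int"

fun chain :: "('i \<Rightarrow> 'k) \<Rightarrow> ('i \<Rightarrow> 'k) \<Rightarrow> 'k \<Rightarrow> 'i list \<Rightarrow> bool" where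
  "chain eL eR e [] = True"
| "chain eL eR e (x # xs) = (eL x = e \<and> chain eL eR (eR x) xs)"

fun rend :: "('i \<Rightarrow> 'k) \<Rightarrow> 'k \<Rightarrow> 'i list \<Rightarrow> 'k" where
  "rend eR e [] = e"
| "rend eR e (x # xs) = rend eR (eR x) xs"

definition valid_path :: "'k set \<Rightarrow> 'i set \<Rightarrow> ('i \<Rightarrow> 'k) \<Rightarrow> ('i \<Rightarrow> 'k) \<Rightarrow> ('k,'i) path \<Rightarrow> bool" where
  "valid_path Idem Gens eL eR p \<longleftrightarrow>
     fst p \<in> Idem \<and> set (snd p) \<subseteq> Gens \<and> chain eL eR (fst p) (snd p)"

definition TV :: "'k set \<Rightarrow> 'i set \<Rightarrow> ('i \<Rightarrow> 'k) \<Rightarrow> ('i \<Rightarrow> 'k) \<Rightarrow> ('k,'i) tel set" where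
  "TV Idem Gens eL eR =
     {f. finite {p. f p \<noteq> 0} \<and> (\<forall>p. f p \<noteq> 0 \<longrightarrow> valid_path Idem Gens eL eR p)}"

text \<open>Elements of T(V) concentrated in tensor length n (n = 1: V, n = 2: V tensor_R V).\<close>
definition Vpow :: "'k set \<Rightarrow> 'i set \<Rightarrow> ('i \<Rightarrow> 'k) \<Rightarrow> ('i \<Rightarrow> 'k) \<Rightarrow> nat set \<Rightarrow> ('k,'i) tel set" where
  "Vpow Idem Gens eL eR N = {f \<in> TV Idem Gens eL eR. \<forall>p. f p \<noteq> 0 \<longrightarrow> length (snd p) \<in> N}"

definition len_part :: "nat \<Rightarrow> ('k,'i) tel \<Rightarrow> ('k,'i) tel" where
  "len_part n f = (\<lambda>p. if length (snd p) = n then f p else 0)"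

definition tmul :: "('i \<Rightarrow> 'k) \<Rightarrow> ('k,'i) tel \<Rightarrow> ('k,'i) tel \<Rightarrow> ('k,'i) tel" where
  "tmul eR f g = (\<lambda>(e, w). \<Sum>n\<le>length w. f (e, take n w) * g (rend eR e (take n w), drop n w))"

definition gen :: "('i \<Rightarrow> 'k) \<Rightarrow> 'i \<Rightarrow> ('k,'i) tel" where
  "gen eL i = (\<lambda>p. if p = (eL i, [i]) then 1 else 0)"

definition zscale :: "int \<Rightarrow> ('a \<Rightarrow> int) \<Rightarrow> 'a \<Rightarrow> int" where
  "zscale c f = (\<lambda>x. c * f x)"

inductive_set zspan :: "('a \<Rightarrow> int) set \<Rightarrow> ('a \<Rightarrow> int) set" for S where
  zero: "0 \<in> zspan S"
| base: "s \<in> S \<Longrightarrow> s \<in> zspan S"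
| add: "x \<in> zspan S \<Longrightarrow> y \<in> zspan S \<Longrightarrow> x + y \<in> zspan S"
| neg: "x \<in> zspan S \<Longrightarrow> - x \<in> zspan S"

inductive_set ideal_gen :: "('k,'i) tel set \<Rightarrow> ('i \<Rightarrow> 'k) \<Rightarrow> ('k,'i) tel set \<Rightarrow> ('k,'i) tel set"
  for T eR S where
  zero: "0 \<in> ideal_gen T eR S"
| gen: "u \<in> T \<Longrightarrow> s \<in> S \<Longrightarrow> v \<in> T \<Longrightarrow> tmul eR (tmul eR u s) v \<in> ideal_gen T eR S"
| add: "x \<in> ideal_gen T eR S \<Longrightarrow> y \<in> ideal_gen T eR S \<Longrightarrow> x + y \<in> ideal_gen T eR S"
| neg: "x \<in> ideal_gen T eR S \<Longrightarrow> - x \<in> ideal_gen T eR S"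

definition J2 :: "'k set \<Rightarrow> 'i set \<Rightarrow> ('i \<Rightarrow> 'k) \<Rightarrow> ('i \<Rightarrow> 'k) \<Rightarrow> ('k,'i) tel set \<Rightarrow> ('k,'i) tel set" where
  "J2 Idem Gens eL eR J = J \<inter> Vpow Idem Gens eL eR {1, 2}"

definition Iset :: "'k set \<Rightarrow> 'i set \<Rightarrow> ('i \<Rightarrow> 'k) \<Rightarrow> ('i \<Rightarrow> 'k) \<Rightarrow> ('k,'i) tel set \<Rightarrow> ('k,'i) tel set" where
  "Iset Idem Gens eL eR J = len_part 2 ` J2 Idem Gens eL eR J"

definition phi :: "'k set \<Rightarrow> 'i set \<Rightarrow> ('i \<Rightarrow> 'k) \<Rightarrow> ('i \<Rightarrow> 'k) \<Rightarrow> ('k,'i) tel set \<Rightarrow> ('k,'i) tel \<Rightarrow> ('k,'i) tel" where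
  "phi Idem Gens eL eR J r =
     (THE v. v \<in> Vpow Idem Gens eL eR {1} \<and> v + r \<in> J2 Idem Gens eL eR J)"

definition paths2 :: "'i set \<Rightarrow> ('i \<Rightarrow> 'k) \<Rightarrow> ('i \<Rightarrow> 'k) \<Rightarrow> ('k,'i) path set" where
  "paths2 Gens eL eR = {(eL a, [a, b]) | a b. a \<in> Gens \<and> b \<in> Gens \<and> eR a = eL b}"

definition pair :: "'i set \<Rightarrow> ('i \<Rightarrow> 'k) \<Rightarrow> ('i \<Rightarrow> 'k) \<Rightarrow> ('k,'i) tel \<Rightarrow> ('k,'i) tel \<Rightarrow> int" where
  "pair Gens eL eR y r = (\<Sum>p\<in>paths2 Gens eL eR. y p * r p)"

definition Iperp :: "'k set \<Rightarrow> 'i set \<Rightarrow> ('i \<Rightarrow> 'k) \<Rightarrow> ('i \<Rightarrow> 'k) \<Rightarrow> ('k,'i) tel set \<Rightarrow> ('k,'i) tel set" where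
  "Iperp Idem Gens eL eR J =
     {y \<in> Vpow Idem Gens eL eR {2}. \<forall>r\<in>Iset Idem Gens eL eR J. pair Gens eL eR y r = 0}"

text \<open>Standing identification: the restriction map (V^* tensor_R V^*)/I^perp \<rightarrow> I^* = Hom_Z(I,Z)
  is an isomorphism, i.e. (injectivity being automatic) every additive functional on I is
  the restriction of an element of V^* tensor_R V^*.\<close>
definition restriction_onto_Idual :: "'k set \<Rightarrow> 'i set \<Rightarrow> ('i \<Rightarrow> 'k) \<Rightarrow> ('i \<Rightarrow> 'k) \<Rightarrow> ('k,'i) tel set \<Rightarrow> bool" where
  "restriction_onto_Idual Idem Gens eL eR J \<longleftrightarrow>
     (\<forall>f :: ('k,'i) tel \<Rightarrow> int.
        (\<forall>r\<in>Iset Idem Gens eL eR J. \<forall>s\<in>Iset Idem Gens eL eR J. f (r + s) = f r + f s)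
        \<longrightarrow> (\<exists>y\<in>Vpow Idem Gens eL eR {2}. \<forall>r\<in>Iset Idem Gens eL eR J. pair Gens eL eR y r = f r))"

text \<open>a tensor_R c^op for a in T(V^*), c in T(V): the tensor is over the right idempotents.\<close>
definition tens :: "('i \<Rightarrow> 'k) \<Rightarrow> ('k,'i) tel \<Rightarrow> ('k,'i) tel \<Rightarrow> ('k,'i) tensel" where
  "tens eR a c = (\<lambda>(p, q). if rend eR (fst p) (snd p) = rend eR (fst q) (snd q) then a p * c q else 0)"

text \<open>The kernel of T(V^*) tensor_R T(V)^op \<rightarrow> B^! tensor_R B^op; an element of the former
  is zero in the latter iff it lies in this subgroup (right exactness of tensor).\<close>
definition Nker :: "'k set \<Rightarrow> 'i set \<Rightarrow> ('i \<Rightarrow> 'k) \<Rightarrow> ('i \<Rightarrow> 'k) \<Rightarrow> ('k,'i) tel set \<Rightarrow> ('k,'i) tensel set" where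
  "Nker Idem Gens eL eR J = zspan
     ({tens eR a c | a c. a \<in> ideal_gen (TV Idem Gens eL eR) eR (Iperp Idem Gens eL eR J)
                          \<and> c \<in> TV Idem Gens eL eR}
      \<union> {tens eR a c | a c. a \<in> TV Idem Gens eL eR \<and> c \<in> J})"

definition hom1 :: "('i \<Rightarrow> 'g::group_add) \<Rightarrow> 'g \<Rightarrow> ('k,'i) tel \<Rightarrow> bool" where
  "hom1 deg g v \<longleftrightarrow> (\<forall>e a. v (e, [a]) \<noteq> 0 \<longrightarrow> deg a = g)"

definition hom2 :: "('i \<Rightarrow> 'g::group_add) \<Rightarrow> 'g \<Rightarrow> ('k,'i) tel \<Rightarrow> bool" where
  "hom2 deg g r \<longleftrightarrow> (\<forall>e a b. r (e, [a, b]) \<noteq> 0 \<longrightarrow> deg a + deg b = g)"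

definition hdeg_B :: nat where "hdeg_B = 0"
definition hdeg_dual :: nat where "hdeg_dual = 1"

definition delta'_idx :: "'i set \<Rightarrow> ('i \<Rightarrow> 'k) \<Rightarrow> 'k \<Rightarrow> 'i set" where
  "delta'_idx Gens eL e = {i \<in> Gens. eL i = e}"

text \<open>Left-hand side of the rank-one type DD relation for
  delta'(1) = sum_s a_s tensor c_s^op (representatives in T(V^*) tensor_R T(V)^op).
  mua s is (a representative of) mu_1(a_s), muc is the differential of B^op,
  ha / hc are homological degrees; c_t^op c_s^op = (c_s c_t)^op.\<close>
definition dd_expr :: "('i \<Rightarrow> 'k) \<Rightarrow> 's set \<Rightarrow> ('s \<Rightarrow> ('k,'i) tel) \<Rightarrow> ('s \<Rightarrow> ('k,'i) tel)
    \<Rightarrow> ('s \<Rightarrow> nat) \<Rightarrow> ('s \<Rightarrow> nat) \<Rightarrow> ('s \<Rightarrow> ('k,'i) tel) \<Rightarrow> (('k,'i) tel \<Rightarrow> ('k,'i) tel)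
    \<Rightarrow> ('k,'i) tensel" where
  "dd_expr eR S a c ha hc mua muc =
      (\<Sum>s\<in>S. zscale ((-1) ^ hc s) (tens eR (mua s) (c s)))
    + (\<Sum>s\<in>S. tens eR (a s) (muc (c s)))
    + (\<Sum>s\<in>S. \<Sum>t\<in>S. zscale ((-1) ^ (ha t * hc s))
                     (tens eR (tmul eR (a s) (a t)) (tmul eR (c s) (c t))))"

end

theory Submission
  imports Defs "HOL.Modules"
begin

(* Let N be the kernel of T(V\<^sup>\<star>) \<otimes> T(V)\<^sup>o\<^sup>p \<rightarrow> B\<^sup>! \<otimes> B\<^sup>o\<^sup>p.  Being a subgroup of the free
   abelian group on the finitely many basis paths of length two, I has generators R\<^sub>j with
   additive coordinate functionals; through the identification (V\<^sup>\<star> \<otimes> V\<^sup>\<star>)/I\<^sup>\<bottom> = I\<^sup>\<star>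
   these lift to elements y\<^sub>j with r = \<Sum>\<^sub>j \<langle>y\<^sub>j, r\<rangle> R\<^sub>j on I.  Modulo I\<^sup>\<bottom>, hence modulo N
   after tensoring, every x \<in> V\<^sup>\<star> \<otimes> V\<^sup>\<star> may be replaced by \<Sum>\<^sub>j \<langle>x, R\<^sub>j\<rangle> y\<^sub>j.  This turns the
   quadratic term \<Sum>\<^sub>s\<^sub>,\<^sub>t b\<^sub>s\<^sup>\<star> b\<^sub>t\<^sup>\<star> \<otimes> (b\<^sub>s b\<^sub>t)\<^sup>o\<^sup>p into \<Sum>\<^sub>j y\<^sub>j \<otimes> R\<^sub>j and, since
   \<langle>\<mu>\<^sub>1(b\<^sub>i\<^sup>\<star>), r\<rangle> = \<phi>(r)\<^sub>i, the \<mu>\<^sub>1-term \<Sum>\<^sub>i \<mu>\<^sub>1(b\<^sub>i\<^sup>\<star>) \<otimes> b\<^sub>i\<^sup>o\<^sup>p into \<Sum>\<^sub>j y\<^sub>j \<otimes> \<phi>(R\<^sub>j).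
   Their sum lies in N because \<phi>(R\<^sub>j) + R\<^sub>j \<in> J. *)

section \<open>Subgroups of integer-valued functions\<close>

interpretation zfun: module "zscale :: int \<Rightarrow> ('a \<Rightarrow> int) \<Rightarrow> 'a \<Rightarrow> int"
  by unfold_locales (auto simp: zscale_def fun_eq_iff algebra_simps)

lemma zscale_apply: "zscale c f x = c * f x"
  by (simp add: zscale_def)

lemma sum_fun_apply: "sum f A x = (\<Sum>i\<in>A. f i x)"
  for f :: "'b \<Rightarrow> 'a \<Rightarrow> 'c::comm_monoid_add"
  by (induction A rule: infinite_finite_induct) auto

lemma zfun_subspaceI:
  fixes S :: "('a \<Rightarrow> int) set"
  assumes zero: "0 \<in> S" and add: "\<And>x y. x \<in> S \<Longrightarrow> y \<in> S \<Longrightarrow> x + y \<in> S"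
    and neg: "\<And>x. x \<in> S \<Longrightarrow> - x \<in> S"
  shows "zfun.subspace S"
proof -
  have nat_multiple: "zscale (int k) x \<in> S" if "x \<in> S" for k x
  proof -
    have "(\<Sum>i<k. x) \<in> S"
      by (induction k) (simp_all only: sum.lessThan_Suc lessThan_0 sum.empty zero add \<open>x \<in> S\<close>)
    then show ?thesis
      using zfun.sum_constant_scale[of x "{..<k}"] by simp
  qed
  have "zscale c x \<in> S" if "x \<in> S" for c x
  proof (cases "c \<ge> 0")
    case True
    with nat_multiple[OF that, of "nat c"] show ?thesis by simp
  next
    case False
    then have "zscale c x = - zscale (int (nat (- c))) x"
      by (simp add: fun_eq_iff zscale_apply)
    with neg[OF nat_multiple[OF that]] show ?thesis by metis
  qed
  then show ?thesis
    unfolding zfun.subspace_def using zero add by blast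
qed

lemma zspan_eq_span: "zspan S = zfun.span S"
proof
  show "zspan S \<subseteq> zfun.span S"
  proof
    show "x \<in> zfun.span S" if "x \<in> zspan S" for x
      using that by induction (simp_all only: zfun.span_base zfun.span_zero zfun.span_add zfun.span_neg)
  qed
  show "zfun.span S \<subseteq> zspan S"
    by (rule zfun.span_minimal) (simp_all only: subsetI zspan.base zfun_subspaceI zspan.intros)
qed

lemma subspace_ideal_gen: "zfun.subspace (ideal_gen T eR S)"
  by (rule zfun_subspaceI) (simp_all only: ideal_gen.intros)

lemma subspace_coordinate_divisor:
  fixes I :: "('a \<Rightarrow> int) set"
  assumes I: "zfun.subspace I"
  obtains r0 where "r0 \<in> I" and "\<And>r. r \<in> I \<Longrightarrow> r0 p dvd r p"
proof (cases "\<forall>r\<in>I. r p = 0")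
  case True
  then show ?thesis using that[of 0] zfun.subspace_0[OF I] by simp
next
  case False
  define attained where "attained k \<longleftrightarrow> 0 < k \<and> (\<exists>r\<in>I. r p = int k)" for k
  obtain r1 where r1: "r1 \<in> I" "r1 p \<noteq> 0" using False by blast
  have "attained (nat \<bar>r1 p\<bar>)"
  proof (cases "r1 p > 0")
    case True
    then show ?thesis using r1 unfolding attained_def by auto
  next
    case False
    then show ?thesis using r1 zfun.subspace_neg[OF I r1(1)]
      unfolding attained_def by (intro conjI bexI[of _ "- r1"]) auto
  qed
  then have "attained (LEAST k. attained k)" by (rule LeastI)
  then obtain r0 where r0: "r0 \<in> I" "r0 p = int (LEAST k. attained k)" "r0 p > 0"
    unfolding attained_def by auto
  have "r0 p dvd r p" if r: "r \<in> I" for r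
  proof (rule ccontr)
    assume "\<not> r0 p dvd r p"
    moreover have "0 \<le> r p mod r0 p" "r p mod r0 p < r0 p"
      using r0(3) by simp_all
    ultimately have rem: "0 < r p mod r0 p" "r p mod r0 p < r0 p"
      by (simp_all add: dvd_eq_mod_eq_0)
    have "r - zscale (r p div r0 p) r0 \<in> I"
      using I r r0(1) by (intro zfun.subspace_diff zfun.subspace_scale)
    moreover have "(r - zscale (r p div r0 p) r0) p = r p mod r0 p"
      by (simp add: zscale_apply minus_div_mult_eq_mod [symmetric])
    ultimately have "attained (nat (r p mod r0 p))"
      using rem unfolding attained_def
      by (intro conjI bexI[of _ "r - zscale (r p div r0 p) r0"]) simp_all
    then show False
      using not_less_Least[of "nat (r p mod r0 p)" attained] rem r0(2) by linarith
  qed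
  with r0(1) show ?thesis by (rule that)
qed

lemma subspace_finite_support_coordinates:
  fixes I :: "('a \<Rightarrow> int) set"
  assumes "finite P" and "zfun.subspace I" and "\<forall>r\<in>I. \<forall>q. r q \<noteq> 0 \<longrightarrow> q \<in> P"
  shows "\<exists>n R F. (\<forall>j<n. R j \<in> I) \<and> (\<forall>j<n. \<forall>r\<in>I. \<forall>s\<in>I. F j (r + s) = F j r + F j s)
           \<and> (\<forall>r\<in>I. r = (\<Sum>j<(n::nat). zscale (F j r) (R j)))"
  using assms
proof (induction P arbitrary: I rule: finite_induct)
  case empty
  have "r = (\<Sum>j<(0::nat). zscale (F j r) (R j))" if "r \<in> I" for r R F
    using empty.prems(2) that by (force simp: fun_eq_iff)
  then show ?case by blast
next
  case (insert p P)
  (* Subtracting multiples of r0 moves I into its subgroup I' vanishing at the new coordinate p. *)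
  obtain r0 where r0: "r0 \<in> I" and dvd: "\<And>r. r \<in> I \<Longrightarrow> r0 p dvd r p"
    using subspace_coordinate_divisor[OF insert.prems(1)] by blast
  define I' where "I' = {r \<in> I. r p = 0}"
  have sub': "zfun.subspace I'"
    using insert.prems(1) unfolding I'_def zfun.subspace_def by (simp add: zscale_apply)
  have supp': "\<forall>r\<in>I'. \<forall>q. r q \<noteq> 0 \<longrightarrow> q \<in> P"
    using insert.prems(2) unfolding I'_def by fastforce
  obtain n :: nat and R F where R: "\<forall>j<n. R j \<in> I'"
    and F: "\<forall>j<n. \<forall>r\<in>I'. \<forall>s\<in>I'. F j (r + s) = F j r + F j s"
    and rep: "\<forall>r\<in>I'. r = (\<Sum>j<n. zscale (F j r) (R j))"
    using insert.IH[OF sub' supp'] by blast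
  define coeff where "coeff r = r p div r0 p" for r
  define rest where "rest r = r - zscale (coeff r) r0" for r
  have rest_I': "rest r \<in> I'" if "r \<in> I" for r
    using dvd[OF that] zfun.subspace_diff[OF insert.prems(1) that zfun.subspace_scale[OF insert.prems(1) r0]]
    unfolding I'_def rest_def coeff_def by (simp add: zscale_apply)
  have coeff_add: "coeff (r + s) = coeff r + coeff s" if "r \<in> I" for r s
    using div_plus_div_distrib_dvd_left[OF dvd[OF that]] unfolding coeff_def by simp
  have rest_add: "rest (r + s) = rest r + rest s" if "r \<in> I" for r s
    unfolding rest_def coeff_add[OF that] by (simp add: fun_eq_iff zscale_apply algebra_simps)
  define R' where "R' j = (if j < n then R j else r0)" for j
  define F' where "F' j r = (if j < n then F j (rest r) else coeff r)" for j r
  have "\<forall>j<Suc n. R' j \<in> I"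
    using R r0 unfolding R'_def I'_def by auto
  moreover have "F' j (r + s) = F' j r + F' j s" if "r \<in> I" "s \<in> I" for j r s
    using F rest_I'[OF that(1)] rest_I'[OF that(2)]
    unfolding F'_def rest_add[OF that(1)] coeff_add[OF that(1)] by simp
  moreover have "r = (\<Sum>j<Suc n. zscale (F' j r) (R' j))" if "r \<in> I" for r
  proof -
    have "(\<Sum>j<Suc n. zscale (F' j r) (R' j)) = (\<Sum>j<n. zscale (F j (rest r)) (R j)) + zscale (coeff r) r0"
      unfolding F'_def R'_def by simp
    also have "(\<Sum>j<n. zscale (F j (rest r)) (R j)) = rest r"
      using rep rest_I'[OF that] by auto
    also have "rest r + zscale (coeff r) r0 = r"
      by (simp add: rest_def)
    finally show ?thesis by (rule sym)
  qed
  ultimately show ?case by blast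
qed

section \<open>Tensors and the pairing\<close>

lemma module_hom_tens_left: "module_hom zscale zscale (\<lambda>a. tens eR a c)"
  unfolding module_hom_iff
  by (simp add: zfun.module_axioms tens_def fun_eq_iff zscale_apply distrib_right)

lemma module_hom_tens_right: "module_hom zscale zscale (\<lambda>c. tens eR a c)"
  unfolding module_hom_iff
  by (simp add: zfun.module_axioms tens_def fun_eq_iff zscale_apply distrib_left)

lemmas tens_diff_left = module_hom.diff[OF module_hom_tens_left]
  and tens_add_right = module_hom.add[OF module_hom_tens_right]
  and tens_zero_right = module_hom.zero[OF module_hom_tens_right]
  and tens_sum_left = module_hom.sum[OF module_hom_tens_left]
  and tens_sum_right = module_hom.sum[OF module_hom_tens_right]
  and tens_zscale_left = module_hom.scale[OF module_hom_tens_left]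
  and tens_zscale_right = module_hom.scale[OF module_hom_tens_right]

lemma pair_commute: "pair Gens eL eR x y = pair Gens eL eR y x"
  by (simp add: pair_def mult.commute)

lemma pair_diff_left: "pair Gens eL eR (x - y) r = pair Gens eL eR x r - pair Gens eL eR y r"
  by (simp add: pair_def left_diff_distrib sum_subtractf)

lemma pair_sum_zscale_left:
  "pair Gens eL eR (\<Sum>j\<in>A. zscale (c j) (y j)) r = (\<Sum>j\<in>A. c j * pair Gens eL eR (y j) r)"
  by (simp add: pair_def sum_fun_apply zscale_apply sum_distrib_left sum_distrib_right
      mult.assoc sum.swap[of _ A])

lemma pair_sum_zscale_right:
  "pair Gens eL eR x (\<Sum>j\<in>A. zscale (c j) (y j)) = (\<Sum>j\<in>A. c j * pair Gens eL eR x (y j))"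
  by (simp add: pair_commute[of _ _ _ x] pair_sum_zscale_left)

section \<open>The path basis of the tensor algebra\<close>

lemma subspace_TV: "zfun.subspace (TV Idem Gens eL eR)"
proof (rule zfun_subspaceI)
  fix x y assume x: "x \<in> TV Idem Gens eL eR" and y: "y \<in> TV Idem Gens eL eR"
  have "{p. (x + y) p \<noteq> 0} \<subseteq> {p. x p \<noteq> 0} \<union> {p. y p \<noteq> 0}"
    by auto
  with x y show "x + y \<in> TV Idem Gens eL eR"
    unfolding TV_def by (auto dest: finite_subset)
qed (auto simp: TV_def)

lemma subspace_Vpow:
  fixes Idem :: "'k set" and Gens :: "'i set"
  shows "zfun.subspace (Vpow Idem Gens eL eR N)"
proof -
  let ?L = "{f :: ('k, 'i) tel. \<forall>p. f p \<noteq> 0 \<longrightarrow> length (snd p) \<in> N}"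
  have "zfun.subspace ?L"
  proof (rule zfun_subspaceI)
    fix x y assume x: "x \<in> ?L" and y: "y \<in> ?L"
    show "x + y \<in> ?L"
    proof (intro CollectI allI impI)
      fix p assume "(x + y) p \<noteq> 0"
      then have "x p \<noteq> 0 \<or> y p \<noteq> 0" by auto
      with x y show "length (snd p) \<in> N" by blast
    qed
  qed simp_all
  moreover have "Vpow Idem Gens eL eR N = TV Idem Gens eL eR \<inter> ?L"
    by (auto simp: Vpow_def)
  ultimately show ?thesis
    using zfun.subspace_inter[OF subspace_TV] by simp
qed

lemma Vpow_into_TV: "x \<in> Vpow Idem Gens eL eR N \<Longrightarrow> x \<in> TV Idem Gens eL eR"
  by (simp add: Vpow_def)

lemma take_drop_eq_singletons: "take n w = [s] \<and> drop n w = [t] \<longleftrightarrow> n = 1 \<and> w = [s, t]"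
proof
  assume split: "take n w = [s] \<and> drop n w = [t]"
  then have "w = [s, t]"
    using append_take_drop_id[of n w] by simp
  with split show "n = 1 \<and> w = [s, t]"
    by (cases n) auto
qed simp

lemma tmul_gen_gen:
  "tmul eR (gen eL s) (gen eL t) = (\<lambda>q. if q = (eL s, [s, t]) \<and> eR s = eL t then 1 else 0)"
proof (rule ext, clarify)
  fix e w
  let ?C = "(e, w) = (eL s, [s, t]) \<and> eR s = eL t"
  have summand: "gen eL s (e, take n w) * gen eL t (rend eR e (take n w), drop n w)
      = (if n = 1 then if ?C then 1 else 0 else 0)" for n
  proof (cases "take n w = [s] \<and> drop n w = [t]")
    case True
    then show ?thesis
      unfolding take_drop_eq_singletons by (auto simp: gen_def)
  next
    case False
    then have "\<not> (n = 1 \<and> w = [s, t])"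
      unfolding take_drop_eq_singletons .
    with False show ?thesis
      by (auto simp: gen_def)
  qed
  have "tmul eR (gen eL s) (gen eL t) (e, w) = (\<Sum>n\<le>length w. if n = 1 then if ?C then 1 else 0 else 0)"
    by (simp only: tmul_def prod.case summand)
  also have "\<dots> = (if ?C then 1 else 0)"
    by (cases w) (simp_all add: sum.delta)
  finally show "tmul eR (gen eL s) (gen eL t) (e, w) = (if ?C then 1 else 0)" .
qed

lemma gen_in_Vpow1:
  assumes "i \<in> Gens" and "eL i \<in> Idem"
  shows "gen eL i \<in> Vpow Idem Gens eL eR {1}"
proof -
  have "{p. gen eL i p \<noteq> 0} = {(eL i, [i])}"
    by (auto simp: gen_def)
  with assms show ?thesis
    by (auto simp: Vpow_def TV_def valid_path_def gen_def)
qed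

lemma tmul_gen_gen_in_Vpow2:
  assumes "s \<in> Gens" and "t \<in> Gens" and "eL s \<in> Idem"
  shows "tmul eR (gen eL s) (gen eL t) \<in> Vpow Idem Gens eL eR {2}"
proof -
  have "{p. tmul eR (gen eL s) (gen eL t) p \<noteq> 0} \<subseteq> {(eL s, [s, t])}"
    by (auto simp: tmul_gen_gen)
  then have "finite {p. tmul eR (gen eL s) (gen eL t) p \<noteq> 0}"
    by (rule finite_subset) simp
  with assms show ?thesis
    by (auto simp: Vpow_def TV_def valid_path_def tmul_gen_gen)
qed

lemma Vpow1_nonzeroD:
  assumes "v \<in> Vpow Idem Gens eL eR {1}" and "v (e, w) \<noteq> 0"
  obtains a where "w = [a]" and "a \<in> Gens" and "e = eL a"
proof -
  have "length w = 1" "set w \<subseteq> Gens" "chain eL eR e w"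
    using assms by (auto simp: Vpow_def TV_def valid_path_def)
  with that show ?thesis
    by (auto simp: length_Suc_conv)
qed

lemma Vpow2_nonzeroD:
  assumes "v \<in> Vpow Idem Gens eL eR {2}" and "v (e, w) \<noteq> 0"
  obtains a b where "w = [a, b]" and "a \<in> Gens" and "b \<in> Gens" and "e = eL a" and "eL b = eR a"
proof -
  have "length w = 2" "set w \<subseteq> Gens" "chain eL eR e w"
    using assms by (auto simp: Vpow_def TV_def valid_path_def)
  with that show ?thesis
    by (auto simp: numeral_2_eq_2 length_Suc_conv)
qed

lemma Vpow1_expansion:
  assumes "finite Gens" and v: "v \<in> Vpow Idem Gens eL eR {1}"
  shows "v = (\<Sum>i\<in>Gens. zscale (v (eL i, [i])) (gen eL i))"
proof (rule ext, clarify)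
  fix e w
  have "(\<Sum>i\<in>Gens. zscale (v (eL i, [i])) (gen eL i)) (e, w)
      = (\<Sum>i\<in>Gens. if (e, w) = (eL i, [i]) then v (e, w) else 0)"
    by (rule trans[OF sum_fun_apply sum.cong]) (auto simp: zscale_apply gen_def)
  also have "\<dots> = v (e, w)"
  proof (cases "v (e, w) = 0")
    case True
    then show ?thesis
      unfolding True by simp
  next
    case False
    with v obtain a where "w = [a]" "a \<in> Gens" "e = eL a"
      by (rule Vpow1_nonzeroD)
    then have "(\<Sum>i\<in>Gens. if (e, w) = (eL i, [i]) then v (e, w) else 0)
        = (\<Sum>i\<in>Gens. if i = a then v (e, w) else 0)"
      by (intro sum.cong) auto
    with assms(1) \<open>a \<in> Gens\<close> show ?thesis
      by simp
  qed
  finally show "v (e, w) = (\<Sum>i\<in>Gens. zscale (v (eL i, [i])) (gen eL i)) (e, w)" ..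
qed

lemma Vpow2_expansion:
  assumes "finite Gens" and v: "v \<in> Vpow Idem Gens eL eR {2}"
  shows "v = (\<Sum>(s, t)\<in>Gens \<times> Gens. zscale (v (eL s, [s, t])) (tmul eR (gen eL s) (gen eL t)))"
proof (rule ext, clarify)
  fix e w
  have "(\<Sum>(s, t)\<in>Gens \<times> Gens. zscale (v (eL s, [s, t])) (tmul eR (gen eL s) (gen eL t))) (e, w)
      = (\<Sum>(s, t)\<in>Gens \<times> Gens. if (e, w) = (eL s, [s, t]) \<and> eR s = eL t then v (e, w) else 0)"
    by (rule trans[OF sum_fun_apply sum.cong]) (auto simp: zscale_apply tmul_gen_gen)
  also have "\<dots> = v (e, w)"
  proof (cases "v (e, w) = 0")
    case True
    then show ?thesis
      unfolding True by simp
  next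
    case False
    with v obtain a b where "w = [a, b]" "a \<in> Gens" "b \<in> Gens" "e = eL a" "eL b = eR a"
      by (rule Vpow2_nonzeroD)
    then have "(\<Sum>(s, t)\<in>Gens \<times> Gens. if (e, w) = (eL s, [s, t]) \<and> eR s = eL t then v (e, w) else 0)
        = (\<Sum>q\<in>Gens \<times> Gens. if q = (a, b) then v (e, w) else 0)"
      by (intro sum.cong) (auto split: if_splits)
    with assms(1) \<open>a \<in> Gens\<close> \<open>b \<in> Gens\<close> show ?thesis
      by simp
  qed
  finally show "v (e, w) = (\<Sum>(s, t)\<in>Gens \<times> Gens. zscale (v (eL s, [s, t])) (tmul eR (gen eL s) (gen eL t))) (e, w)" ..
qed

lemma finite_paths2: "finite Gens \<Longrightarrow> finite (paths2 Gens eL eR)"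
proof -
  assume "finite Gens"
  moreover have "paths2 Gens eL eR \<subseteq> (\<lambda>(a, b). (eL a, [a, b])) ` (Gens \<times> Gens)"
    by (auto simp: paths2_def)
  ultimately show ?thesis
    by (meson finite_SigmaI finite_imageI finite_subset)
qed

lemma pair_tmul_gen_gen:
  assumes "finite Gens" and "s \<in> Gens" and "t \<in> Gens" and r: "r \<in> Vpow Idem Gens eL eR {2}"
  shows "pair Gens eL eR (tmul eR (gen eL s) (gen eL t)) r = r (eL s, [s, t])"
proof (cases "eR s = eL t")
  case True
  with assms(2,3) have "(eL s, [s, t]) \<in> paths2 Gens eL eR"
    by (auto simp: paths2_def)
  have "pair Gens eL eR (tmul eR (gen eL s) (gen eL t)) r
      = (\<Sum>p\<in>paths2 Gens eL eR. if p = (eL s, [s, t]) then r p else 0)"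
    unfolding pair_def tmul_gen_gen using True by (intro sum.cong) auto
  with \<open>(eL s, [s, t]) \<in> paths2 Gens eL eR\<close> show ?thesis
    by (simp add: finite_paths2[OF assms(1)])
next
  case False
  have "r (eL s, [s, t]) = 0"
  proof (rule ccontr)
    assume "r (eL s, [s, t]) \<noteq> 0"
    with r obtain a b where "[s, t] = [a, b]" and "eL b = eR a"
      by (rule Vpow2_nonzeroD)
    with False show False by simp
  qed
  with False show ?thesis
    by (simp add: pair_def tmul_gen_gen)
qed

definition tensor_unit :: "'k set \<Rightarrow> ('k, 'i) tel" where
  "tensor_unit Idem = (\<lambda>p. if snd p = [] \<and> fst p \<in> Idem then 1 else 0)"

lemma tensor_unit_in_TV:
  assumes "finite Idem"
  shows "tensor_unit Idem \<in> TV Idem Gens eL eR"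
proof -
  have support: "{p. tensor_unit Idem p \<noteq> 0} = (\<lambda>e. (e, [])) ` Idem"
    by (auto simp: tensor_unit_def)
  show ?thesis
    unfolding TV_def
  proof (intro CollectI conjI allI impI)
    show "finite {p. tensor_unit Idem p \<noteq> 0}"
      unfolding support using assms by (rule finite_imageI)
    show "valid_path Idem Gens eL eR p" if "tensor_unit Idem p \<noteq> 0" for p
      using that by (auto simp: valid_path_def tensor_unit_def split: if_splits)
  qed
qed

lemma tmul_tensor_unit_left:
  assumes "z \<in> TV Idem Gens eL eR"
  shows "tmul eR (tensor_unit Idem) z = z"
proof (rule ext, clarify)
  fix e w
  have "tmul eR (tensor_unit Idem) z (e, w) = (if e \<in> Idem then z (e, w) else 0)"
    by (simp add: tmul_def tensor_unit_def sum.atMost_shift)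
  also have "\<dots> = z (e, w)"
    using assms by (auto simp: TV_def valid_path_def)
  finally show "tmul eR (tensor_unit Idem) z (e, w) = z (e, w)" .
qed

lemma rend_in_Idem: "e \<in> Idem \<Longrightarrow> set w \<subseteq> Gens \<Longrightarrow> eR ` Gens \<subseteq> Idem \<Longrightarrow> rend eR e w \<in> Idem"
  by (induction w arbitrary: e) auto

lemma tmul_tensor_unit_right:
  assumes "z \<in> TV Idem Gens eL eR" and "eR ` Gens \<subseteq> Idem"
  shows "tmul eR z (tensor_unit Idem) = z"
proof (rule ext, clarify)
  fix e w
  have "z (e, take n w) * tensor_unit Idem (rend eR e (take n w), drop n w)
      = (if n = length w then if rend eR e w \<in> Idem then z (e, w) else 0 else 0)" if "n \<le> length w" for n
    using that by (auto simp: tensor_unit_def)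
  then have "tmul eR z (tensor_unit Idem) (e, w) = (if rend eR e w \<in> Idem then z (e, w) else 0)"
    by (simp add: tmul_def)
  also have "\<dots> = z (e, w)"
  proof (cases "z (e, w) = 0")
    case False
    with assms(1) have "e \<in> Idem" and "set w \<subseteq> Gens"
      by (auto simp: TV_def valid_path_def)
    with assms(2) show ?thesis
      by (simp add: rend_in_Idem)
  qed simp
  finally show "tmul eR z (tensor_unit Idem) (e, w) = z (e, w)" .
qed

lemma mem_ideal_gen:
  assumes "finite Idem" and "eR ` Gens \<subseteq> Idem" and "a \<in> S" and "a \<in> TV Idem Gens eL eR"
  shows "a \<in> ideal_gen (TV Idem Gens eL eR) eR S"
proof -
  have unit: "tensor_unit Idem \<in> TV Idem Gens eL eR"
    by (rule tensor_unit_in_TV[OF assms(1)])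
  have "tmul eR (tmul eR (tensor_unit Idem) a) (tensor_unit Idem) \<in> ideal_gen (TV Idem Gens eL eR) eR S"
    using unit assms(3) unit by (rule ideal_gen.gen)
  then show ?thesis
    by (simp only: tmul_tensor_unit_left[OF assms(4)] tmul_tensor_unit_right[OF assms(4,2)])
qed

lemma module_hom_len_part: "module_hom zscale zscale (len_part n)"
  unfolding module_hom_iff
  by (simp add: zfun.module_axioms len_part_def fun_eq_iff zscale_apply)

lemma len_part_in_Vpow:
  assumes "x \<in> TV Idem Gens eL eR"
  shows "len_part n x \<in> Vpow Idem Gens eL eR {n}"
proof -
  have "{p. len_part n x p \<noteq> 0} \<subseteq> {p. x p \<noteq> 0}"
    by (auto simp: len_part_def)
  with assms show ?thesis
    unfolding Vpow_def TV_def by (auto simp: len_part_def dest: finite_subset split: if_splits)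
qed

lemma len_part_1_add_len_part_2:
  assumes "x \<in> Vpow Idem Gens eL eR {1, 2}"
  shows "len_part 1 x + len_part 2 x = x"
proof (rule ext)
  fix p
  show "(len_part 1 x + len_part 2 x) p = x p"
    using assms by (cases p; cases "x p = 0") (auto simp: Vpow_def len_part_def)
qed

lemma dd_expr_delta':
  "dd_expr eR S (gen eL) (gen eL) (\<lambda>_. hdeg_dual) (\<lambda>_. hdeg_B) psi (\<lambda>_. 0)
     = (\<Sum>i\<in>S. tens eR (psi i) (gen eL i))
       + (\<Sum>s\<in>S. \<Sum>t\<in>S. tens eR (tmul eR (gen eL s) (gen eL t)) (tmul eR (gen eL s) (gen eL t)))"
  by (simp add: dd_expr_def hdeg_dual_def hdeg_B_def tens_zero_right)

section \<open>Linear-quadratic algebras\<close>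

locale lq_algebra =
  fixes Idem :: "'k set" and Gens :: "'i set" and eL eR :: "'i \<Rightarrow> 'k"
    and J :: "('k, 'i) tel set"
  assumes finite_Idem: "finite Idem" and finite_Gens: "finite Gens"
    and eL_Gens: "eL ` Gens \<subseteq> Idem" and eR_Gens: "eR ` Gens \<subseteq> Idem"
    and J_eq: "J = ideal_gen (TV Idem Gens eL eR) eR (J2 Idem Gens eL eR J)"
    and J_inter_V1: "J \<inter> Vpow Idem Gens eL eR {1} = {0}"
begin

abbreviation "T \<equiv> TV Idem Gens eL eR"
abbreviation "V n \<equiv> Vpow Idem Gens eL eR {n}"
abbreviation "I \<equiv> Iset Idem Gens eL eR J"
abbreviation "\<phi> \<equiv> phi Idem Gens eL eR J"
abbreviation "pairing \<equiv> pair Gens eL eR"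
abbreviation "N \<equiv> Nker Idem Gens eL eR J"

lemma subspace_J: "zfun.subspace J"
  by (subst J_eq) (rule subspace_ideal_gen)

lemma subspace_J2: "zfun.subspace (J2 Idem Gens eL eR J)"
  unfolding J2_def by (rule zfun.subspace_inter[OF subspace_J subspace_Vpow])

lemma subspace_Iset: "zfun.subspace I"
  unfolding Iset_def by (rule module_hom.subspace_image[OF module_hom_len_part subspace_J2])

lemma Iset_subset_Vpow2: "I \<subseteq> V 2"
  by (fastforce simp: Iset_def J2_def intro: len_part_in_Vpow Vpow_into_TV)

lemma Iset_support: "\<forall>r\<in>I. \<forall>q. r q \<noteq> 0 \<longrightarrow> q \<in> paths2 Gens eL eR"
proof (intro ballI allI impI)
  fix r q assume "r \<in> I" and nonzero: "r q \<noteq> 0"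
  obtain e w where q: "q = (e, w)" by fastforce
  have "r \<in> V 2"
    using \<open>r \<in> I\<close> Iset_subset_Vpow2 by blast
  moreover have "r (e, w) \<noteq> 0"
    using nonzero q by simp
  ultimately obtain a b where "w = [a, b]" "a \<in> Gens" "b \<in> Gens" "e = eL a" "eL b = eR a"
    by (rule Vpow2_nonzeroD)
  then show "q \<in> paths2 Gens eL eR"
    unfolding q paths2_def by auto
qed

lemma phi_spec:
  assumes "r \<in> I"
  shows "\<phi> r \<in> V 1 \<and> \<phi> r + r \<in> J2 Idem Gens eL eR J"
proof -
  obtain a where a: "a \<in> J2 Idem Gens eL eR J" and r: "r = len_part 2 a"
    using assms by (auto simp: Iset_def)
  have a12: "a \<in> Vpow Idem Gens eL eR {1, 2}"
    using a by (simp add: J2_def)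
  have "len_part 1 a \<in> V 1"
    using a12 by (blast intro: len_part_in_Vpow Vpow_into_TV)
  moreover have "len_part 1 a + r \<in> J2 Idem Gens eL eR J"
    using a r len_part_1_add_len_part_2[OF a12] by simp
  moreover have "v = len_part 1 a" if "v \<in> V 1" and "v + r \<in> J2 Idem Gens eL eR J" for v
  proof -
    have "(v + r) - (len_part 1 a + r) \<in> J"
      using that(2) \<open>len_part 1 a + r \<in> J2 Idem Gens eL eR J\<close>
      by (intro zfun.subspace_diff[OF subspace_J]) (auto simp: J2_def)
    moreover have "v - len_part 1 a \<in> V 1"
      using that(1) \<open>len_part 1 a \<in> V 1\<close> by (rule zfun.subspace_diff[OF subspace_Vpow])
    ultimately have "v - len_part 1 a \<in> J \<inter> V 1"
      by simp
    then have "v - len_part 1 a = 0"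
      using J_inter_V1 by blast
    then show ?thesis
      by simp
  qed
  ultimately have "\<phi> r = len_part 1 a"
    unfolding phi_def by (intro the_equality) blast+
  with \<open>len_part 1 a \<in> V 1\<close> \<open>len_part 1 a + r \<in> J2 Idem Gens eL eR J\<close> show ?thesis
    by simp
qed

lemma gen_in_TV: "i \<in> Gens \<Longrightarrow> gen eL i \<in> T"
  using eL_Gens by (blast intro: Vpow_into_TV gen_in_Vpow1)

lemma subspace_Nker: "zfun.subspace N"
  unfolding Nker_def zspan_eq_span by (rule zfun.subspace_span)

lemma tens_in_Nker_left:
  assumes "a \<in> Iperp Idem Gens eL eR J" and "c \<in> T"
  shows "tens eR a c \<in> N"
proof -
  have "a \<in> T"
    using assms(1) by (auto simp: Iperp_def intro: Vpow_into_TV)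
  with assms(1) have "a \<in> ideal_gen T eR (Iperp Idem Gens eL eR J)"
    by (intro mem_ideal_gen finite_Idem eR_Gens)
  with assms(2) show ?thesis
    unfolding Nker_def by (blast intro: zspan.base)
qed

lemma tens_in_Nker_right:
  assumes "a \<in> T" and "c \<in> J"
  shows "tens eR a c \<in> N"
  using assms unfolding Nker_def by (blast intro: zspan.base)

lemma Iset_dual_coordinates:
  assumes "restriction_onto_Idual Idem Gens eL eR J"
  obtains n :: nat and R y where "\<forall>j<n. R j \<in> I" and "\<forall>j<n. y j \<in> V 2"
    and "\<forall>r\<in>I. r = (\<Sum>j<n. zscale (pairing (y j) r) (R j))"
proof -
  obtain n :: nat and R F where R: "\<forall>j<n. R j \<in> I"
    and F: "\<forall>j<n. \<forall>r\<in>I. \<forall>s\<in>I. F j (r + s) = F j r + F j s"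
    and rep: "\<forall>r\<in>I. r = (\<Sum>j<n. zscale (F j r) (R j))"
    using subspace_finite_support_coordinates[OF finite_paths2[OF finite_Gens] subspace_Iset Iset_support]
    by blast
  have "\<exists>yj \<in> V 2. \<forall>r\<in>I. pairing yj r = F j r" if "j < n" for j
    using assms F that unfolding restriction_onto_Idual_def by blast
  then obtain y where y: "\<forall>j<n. y j \<in> V 2 \<and> (\<forall>r\<in>I. pairing (y j) r = F j r)"
    by metis
  have "r = (\<Sum>j<n. zscale (pairing (y j) r) (R j))" if "r \<in> I" for r
    using rep y that by simp
  with R y that show thesis
    by blast
qed

end

(* The R\<^sub>j generate I with additive coordinate functionals, lifted to the y\<^sub>j through the
   identification (V\<^sup>\<star> \<otimes> V\<^sup>\<star>)/I\<^sup>\<bottom> = I\<^sup>\<star>. *)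
locale lq_dual_coordinates = lq_algebra Idem Gens eL eR J
  for Idem :: "'k set" and Gens :: "'i set" and eL eR :: "'i \<Rightarrow> 'k" and J :: "('k, 'i) tel set" +
  fixes n :: nat and R y :: "nat \<Rightarrow> ('k, 'i) tel"
  assumes R_in_Iset: "\<forall>j<n. R j \<in> Iset Idem Gens eL eR J"
    and y_in_Vpow2: "\<forall>j<n. y j \<in> Vpow Idem Gens eL eR {2}"
    and Iset_representation:
      "\<forall>r\<in>Iset Idem Gens eL eR J. r = (\<Sum>j<n. zscale (pair Gens eL eR (y j) r) (R j))"
begin

definition proj :: "('k, 'i) tel \<Rightarrow> ('k, 'i) tel" where
  "proj x = (\<Sum>j<n. zscale (pairing x (R j)) (y j))"

lemma proj_in_Vpow2: "proj x \<in> V 2"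
  unfolding proj_def using y_in_Vpow2
  by (intro zfun.subspace_sum[OF subspace_Vpow] zfun.subspace_scale[OF subspace_Vpow]) auto

lemma diff_proj_in_Iperp:
  assumes "x \<in> V 2"
  shows "x - proj x \<in> Iperp Idem Gens eL eR J"
  unfolding Iperp_def
proof (intro CollectI conjI ballI)
  show "x - proj x \<in> V 2"
    using assms proj_in_Vpow2 by (rule zfun.subspace_diff[OF subspace_Vpow])
  fix r assume "r \<in> I"
  then have "r = (\<Sum>j<n. zscale (pairing (y j) r) (R j))"
    using Iset_representation by blast
  then have "pairing x r = pairing x (\<Sum>j<n. zscale (pairing (y j) r) (R j))"
    by (rule arg_cong)
  also have "\<dots> = (\<Sum>j<n. pairing (y j) r * pairing x (R j))"
    by (rule pair_sum_zscale_right)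
  finally have "pairing x r = (\<Sum>j<n. pairing (y j) r * pairing x (R j))" .
  then show "pairing (x - proj x) r = 0"
    by (simp add: proj_def pair_diff_left pair_sum_zscale_left mult.commute)
qed

lemma tens_proj_sum:
  "(\<Sum>k\<in>A. tens eR (proj (x k)) (u k))
     = (\<Sum>j<n. tens eR (y j) (\<Sum>k\<in>A. zscale (pairing (x k) (R j)) (u k)))"
  by (simp add: proj_def tens_sum_left tens_sum_right tens_zscale_left tens_zscale_right
      sum.swap[of _ A])

lemma tens_diff_proj_in_Nker:
  assumes "x \<in> V 2" and "c \<in> T"
  shows "tens eR x c - tens eR (proj x) c \<in> N"
  using tens_in_Nker_left[OF diff_proj_in_Iperp[OF assms(1)] assms(2)] by (simp add: tens_diff_left)

lemma quadratic_term_mod_Nker: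
  "(\<Sum>(s, t)\<in>Gens \<times> Gens. tens eR (tmul eR (gen eL s) (gen eL t)) (tmul eR (gen eL s) (gen eL t)))
     - (\<Sum>j<n. tens eR (y j) (R j)) \<in> N"
proof -
  define m where "m = (\<lambda>(s, t). tmul eR (gen eL s) (gen eL t))"
  have m_in_Vpow2: "m k \<in> V 2" if "k \<in> Gens \<times> Gens" for k
    using that eL_Gens by (auto simp: m_def intro: tmul_gen_gen_in_Vpow2)
  have "(\<Sum>k\<in>Gens \<times> Gens. zscale (pairing (m k) (R j)) (m k)) = R j" if "j < n" for j
  proof -
    have "R j \<in> V 2"
      using that R_in_Iset Iset_subset_Vpow2 by blast
    then have "(\<Sum>k\<in>Gens \<times> Gens. zscale (pairing (m k) (R j)) (m k))
        = (\<Sum>(s, t)\<in>Gens \<times> Gens. zscale (R j (eL s, [s, t])) (tmul eR (gen eL s) (gen eL t)))"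
      by (intro sum.cong) (auto simp: m_def pair_tmul_gen_gen finite_Gens)
    also have "\<dots> = R j"
      using \<open>R j \<in> V 2\<close> by (rule Vpow2_expansion[OF finite_Gens, symmetric])
    finally show ?thesis .
  qed
  then have "(\<Sum>k\<in>Gens \<times> Gens. tens eR (proj (m k)) (m k)) = (\<Sum>j<n. tens eR (y j) (R j))"
    unfolding tens_proj_sum by simp
  moreover have "(\<Sum>k\<in>Gens \<times> Gens. tens eR (m k) (m k) - tens eR (proj (m k)) (m k)) \<in> N"
    using m_in_Vpow2
    by (intro zfun.subspace_sum[OF subspace_Nker] tens_diff_proj_in_Nker) (auto intro: Vpow_into_TV)
  ultimately show ?thesis
    by (simp add: sum_subtractf m_def split_def)
qed

lemma mu1_term_mod_Nker:
  assumes psi_in: "\<forall>i\<in>Gens. psi i \<in> V 2"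
    and psi_pair: "\<forall>i\<in>Gens. \<forall>r\<in>I. pairing (psi i) r = \<phi> r (eL i, [i])"
  shows "(\<Sum>i\<in>Gens. tens eR (psi i) (gen eL i)) - (\<Sum>j<n. tens eR (y j) (\<phi> (R j))) \<in> N"
proof -
  have "(\<Sum>i\<in>Gens. zscale (pairing (psi i) (R j)) (gen eL i)) = \<phi> (R j)" if "j < n" for j
  proof -
    have "R j \<in> I"
      using that R_in_Iset by blast
    then have "(\<Sum>i\<in>Gens. zscale (pairing (psi i) (R j)) (gen eL i))
        = (\<Sum>i\<in>Gens. zscale (\<phi> (R j) (eL i, [i])) (gen eL i))"
      using psi_pair by (intro sum.cong) auto
    also have "\<dots> = \<phi> (R j)"
      using phi_spec[OF \<open>R j \<in> I\<close>] by (intro Vpow1_expansion[OF finite_Gens, symmetric]) blast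
    finally show ?thesis .
  qed
  then have "(\<Sum>i\<in>Gens. tens eR (proj (psi i)) (gen eL i)) = (\<Sum>j<n. tens eR (y j) (\<phi> (R j)))"
    unfolding tens_proj_sum by simp
  moreover have "(\<Sum>i\<in>Gens. tens eR (psi i) (gen eL i) - tens eR (proj (psi i)) (gen eL i)) \<in> N"
    using psi_in
    by (intro zfun.subspace_sum[OF subspace_Nker] tens_diff_proj_in_Nker) (auto intro: gen_in_TV)
  ultimately show ?thesis
    by (simp add: sum_subtractf)
qed

lemma relation_term_in_Nker: "(\<Sum>j<n. tens eR (y j) (\<phi> (R j) + R j)) \<in> N"
  using y_in_Vpow2 R_in_Iset phi_spec
  by (intro zfun.subspace_sum[OF subspace_Nker] tens_in_Nker_right) (auto simp: J2_def intro: Vpow_into_TV)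

end

theorem proposition4p25:
  fixes Idem :: "'k set" and Gens :: "'i set" and eL eR :: "'i \<Rightarrow> 'k"
    and J :: "('k,'i) tel set" and deg :: "'i \<Rightarrow> 'g::group_add"
    and psi :: "'i \<Rightarrow> ('k,'i) tel"
  assumes fin_idem: "finite Idem" and fin_gens: "finite Gens"
    and eL_idem: "eL ` Gens \<subseteq> Idem" and eR_idem: "eR ` Gens \<subseteq> Idem"
    and J_gen: "J = ideal_gen (TV Idem Gens eL eR) eR (J2 Idem Gens eL eR J)"
    and J_V: "J \<inter> Vpow Idem Gens eL eR {1} = {0}"
    and I_hom: "Iset Idem Gens eL eR J
                  = zspan {r \<in> Iset Idem Gens eL eR J. \<exists>g. hom2 deg g r}"
    and phi_hom: "\<forall>r\<in>Iset Idem Gens eL eR J. \<forall>g. hom2 deg g r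
                    \<longrightarrow> hom1 deg g (phi Idem Gens eL eR J r)"
    and I_ident: "restriction_onto_Idual Idem Gens eL eR J"
    and psi_in: "\<forall>i\<in>Gens. psi i \<in> Vpow Idem Gens eL eR {2}"
    and psi_mu1: "\<forall>i\<in>Gens. \<forall>r\<in>Iset Idem Gens eL eR J.
                    pair Gens eL eR (psi i) r = phi Idem Gens eL eR J r (eL i, [i])"
  shows "dd_expr eR (\<Union>e\<in>Idem. delta'_idx Gens eL e) (gen eL) (gen eL)
            (\<lambda>_. hdeg_dual) (\<lambda>_. hdeg_B) psi (\<lambda>_. 0)
         \<in> Nker Idem Gens eL eR J"
proof -
  interpret lq_algebra Idem Gens eL eR J
    using fin_idem fin_gens eL_idem eR_idem J_gen J_V by unfold_locales
  obtain n :: nat and R y where "\<forall>j<n. R j \<in> I" and "\<forall>j<n. y j \<in> V 2"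
    and "\<forall>r\<in>I. r = (\<Sum>j<n. zscale (pairing (y j) r) (R j))"
    using I_ident by (rule Iset_dual_coordinates)
  then interpret lq_dual_coordinates Idem Gens eL eR J n R y
    by unfold_locales
  let ?mu1_term = "\<Sum>i\<in>Gens. tens eR (psi i) (gen eL i)"
  let ?quadratic_term = "\<Sum>(s, t)\<in>Gens \<times> Gens.
    tens eR (tmul eR (gen eL s) (gen eL t)) (tmul eR (gen eL s) (gen eL t))"
  have "(\<Union>e\<in>Idem. delta'_idx Gens eL e) = Gens"
    using eL_idem by (auto simp: delta'_idx_def)
  then have "dd_expr eR (\<Union>e\<in>Idem. delta'_idx Gens eL e) (gen eL) (gen eL)
      (\<lambda>_. hdeg_dual) (\<lambda>_. hdeg_B) psi (\<lambda>_. 0) = ?mu1_term + ?quadratic_term"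
    by (simp add: dd_expr_delta' sum.cartesian_product)
  also have "\<dots> = (?mu1_term - (\<Sum>j<n. tens eR (y j) (\<phi> (R j))))
      + (?quadratic_term - (\<Sum>j<n. tens eR (y j) (R j))) + (\<Sum>j<n. tens eR (y j) (\<phi> (R j) + R j))"
    by (simp add: tens_add_right sum.distrib)
  also have "\<dots> \<in> N"
    using mu1_term_mod_Nker[OF psi_in psi_mu1] quadratic_term_mod_Nker relation_term_in_Nker
    by (intro zfun.subspace_add[OF subspace_Nker])
  finally show ?thesis .
qed

end
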